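(* Let $A\in\mathbb{R}^{m\times n}$ and let $A=U_1-V_1=U_2-V_2$ be two convergent proper nonnegative splittings of different types (one of type I and the other of type II). If $A^{\dagger}\leq 0$ and $U_2^{\dagger}\geq U_1^{\dagger}$, then $\rho(U_1^{\dagger}V_1)\leq\rho(U_2^{\dagger}V_2)<1$. In particular, if $A^{\dagger}<0$ and $U_2^{\dagger}>U_1^{\dagger}$, then $\rho(U_1^{\dagger}V_1)<\rho(U_2^{\dagger}V_2)<1$.
   Context: $A^{\dagger}$ denotes the Moore–Penrose inverse and $\rho(\cdot)$ the spectral radius. Inequalities are entrywise; strict inequalities $X>Y$, $X<0$ mean entrywise strict. A splitting $A=U-V$ is proper if $R(U)=R(A)$ and $N(U)=N(A)$; it is convergent if $\rho(U^{\dagger}V)<1$. A proper splitting is a proper nonnegative splitting of type I if $U^{\dagger}V\geq 0$, and of type II if $VU^{\dagger}\geq 0$. *)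

theory Defs
  imports "Jordan_Normal_Form.Spectral_Radius"
begin

definition is_mp_inverse :: "real mat \<Rightarrow> real mat \<Rightarrow> bool" where
  "is_mp_inverse A X \<longleftrightarrow> X \<in> carrier_mat (dim_col A) (dim_row A) \<and>
     A * X * A = A \<and> X * A * X = X \<and>
     transpose_mat (A * X) = A * X \<and> transpose_mat (X * A) = X * A"

definition mp_inverse :: "real mat \<Rightarrow> real mat" where
  "mp_inverse A = (THE X. is_mp_inverse A X)"

definition col_range :: "real mat \<Rightarrow> real vec set" where
  "col_range A = {mult_mat_vec A x | x. x \<in> carrier_vec (dim_col A)}"

definition null_space :: "real mat \<Rightarrow> real vec set" where
  "null_space A = {x \<in> carrier_vec (dim_col A). mult_mat_vec A x = 0\<^sub>v (dim_row A)}"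

definition mat_le :: "real mat \<Rightarrow> real mat \<Rightarrow> bool" where
  "mat_le X Y \<longleftrightarrow> dim_row X = dim_row Y \<and> dim_col X = dim_col Y \<and>
     (\<forall>i < dim_row X. \<forall>j < dim_col X. X $$ (i,j) \<le> Y $$ (i,j))"

definition mat_lt :: "real mat \<Rightarrow> real mat \<Rightarrow> bool" where
  "mat_lt X Y \<longleftrightarrow> dim_row X = dim_row Y \<and> dim_col X = dim_col Y \<and>
     (\<forall>i < dim_row X. \<forall>j < dim_col X. X $$ (i,j) < Y $$ (i,j))"

definition rho :: "real mat \<Rightarrow> real" where
  "rho M = spectral_radius (map_mat complex_of_real M)"

definition proper_splitting :: "real mat \<Rightarrow> real mat \<Rightarrow> real mat \<Rightarrow> bool" where
  "proper_splitting A U V \<longleftrightarrow>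
     U \<in> carrier_mat (dim_row A) (dim_col A) \<and> V \<in> carrier_mat (dim_row A) (dim_col A) \<and>
     A = U - V \<and> col_range U = col_range A \<and> null_space U = null_space A"

definition convergent_splitting :: "real mat \<Rightarrow> real mat \<Rightarrow> bool" where
  "convergent_splitting U V \<longleftrightarrow> rho (mp_inverse U * V) < 1"

definition proper_nonneg_splitting_I :: "real mat \<Rightarrow> real mat \<Rightarrow> real mat \<Rightarrow> bool" where
  "proper_nonneg_splitting_I A U V \<longleftrightarrow> proper_splitting A U V \<and>
     mat_le (0\<^sub>m (dim_col A) (dim_col A)) (mp_inverse U * V)"

definition proper_nonneg_splitting_II :: "real mat \<Rightarrow> real mat \<Rightarrow> real mat \<Rightarrow> bool" where
  "proper_nonneg_splitting_II A U V \<longleftrightarrow> proper_splitting A U V \<and>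
     mat_le (0\<^sub>m (dim_row A) (dim_row A)) (V * mp_inverse U)"

end

theory Submission
  imports Defs
begin

(* For a proper splitting A = U - V the orthogonal projections agree, U U^+ = A A^+ and
   U^+ U = A^+ A, which gives U^+ V A^+ = A^+ - U^+ = A^+ V U^+.  Put N = -A^+ >= 0.  For a type I
   splitting (U1, V1) and a type II splitting (U2, V2) the matrices T = U1^+ V1 and S = V2 U2^+
   are nonnegative, and the identities read T N = U1^+ - A^+ and N S = U2^+ - A^+, so
   U1^+ <= U2^+ is the intertwining inequality T N <= N S, whence T^k N <= N S^k.  Since
   T = N (-A T), every eigenvector of T for a nonzero eigenvalue lambda has the form N w; then
   |lambda|^k is bounded by entries of S^k, which forces |lambda| <= rho(S) = rho(U2^+ V2).
   Strict hypotheses leave room for a factor 1 + d.  The mixed case in the other order is the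
   same argument for the transposed matrices. *)

lemma assoc_mult_mat_dim:
  fixes A B C :: "'a :: semiring_0 mat"
  assumes "dim_col A = dim_row B" and "dim_col B = dim_row C"
  shows "A * B * C = A * (B * C)"
  using assms by (intro assoc_mult_mat[of A "dim_row A" "dim_col A" B "dim_col B" C "dim_col C"]) auto

lemma transpose_mult_dim:
  fixes A B :: "'a :: comm_semiring_0 mat"
  assumes "dim_col A = dim_row B"
  shows "transpose_mat (A * B) = transpose_mat B * transpose_mat A"
  using assms by (intro transpose_mult[of A "dim_row A" "dim_col A" B "dim_col B"]) auto

lemma assoc_mult_mat_vec_dim:
  fixes A B :: "'a :: semiring_0 mat"
  assumes "dim_col A = dim_row B" and "dim_col B = dim_vec v"
  shows "(A * B) *\<^sub>v v = A *\<^sub>v (B *\<^sub>v v)"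
  using assms by (intro assoc_mult_mat_vec[of A "dim_row A" "dim_col A" B "dim_col B"]) auto

lemma index_mult_mat_sum:
  fixes A B :: "'a :: semiring_0 mat"
  assumes "A \<in> carrier_mat a b" and "B \<in> carrier_mat b c" and "i < a" and "j < c"
  shows "(A * B) $$ (i,j) = (\<Sum>l<b. A $$ (i,l) * B $$ (l,j))"
  using assms by (auto simp: scalar_prod_def atLeast0LessThan intro!: sum.cong)

lemma uminus_minus_mat:
  fixes A B :: "'a :: ab_group_add mat"
  assumes "A \<in> carrier_mat n m" and "B \<in> carrier_mat n m"
  shows "- (A - B) = B - A"
  using assms by (intro eq_matI) auto

subsection \<open>Generalised inverses and the Moore-Penrose inverse\<close>

lemma row_echelon_generalized_inverse:
  fixes C :: "'a :: field mat"
  assumes C: "C \<in> carrier_mat nr nc" and pf: "pivot_fun C f nc"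
  shows "\<exists>Z \<in> carrier_mat nc nr. C * Z * C = C"
proof -
  note piv = pivot_funD[OF _ pf, of nr]
  define Z where "Z = mat nc nr (\<lambda>(j,i). if f i < nc \<and> j = f i then (1::'a) else 0)"
  have Z: "Z \<in> carrier_mat nc nr" unfolding Z_def by auto
  have CZ: "(C * Z) $$ (k,i) = (if i = k \<and> f k < nc then 1 else 0)" if "k < nr" and "i < nr" for k i
  proof -
    have "(C * Z) $$ (k,i) = (\<Sum>j<nc. C $$ (k,j) * Z $$ (j,i))"
      by (rule index_mult_mat_sum[OF C Z that])
    also have "\<dots> = (\<Sum>j<nc. C $$ (k,j) * (if f i < nc \<and> j = f i then 1 else 0))"
      using that by (intro sum.cong) (auto simp: Z_def)
    also have "\<dots> = (if f i < nc then C $$ (k, f i) else 0)"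
      by (auto simp: if_distrib cong: if_cong)
    also have "\<dots> = (if i = k \<and> f k < nc then 1 else 0)"
      using piv(4)[of i] piv(5)[of i k] C that by auto
    finally show ?thesis .
  qed
  have "C * Z * C = C"
  proof (rule eq_matI)
    fix k l assume "k < dim_row C" and "l < dim_col C"
    hence k: "k < nr" and l: "l < nc" using C by auto
    have "(C * Z * C) $$ (k,l) = (\<Sum>i<nr. (C * Z) $$ (k,i) * C $$ (i,l))"
      using C Z k l by (intro index_mult_mat_sum) auto
    also have "\<dots> = (\<Sum>i<nr. if i = k \<and> f k < nc then C $$ (i,l) else 0)"
      using k by (intro sum.cong) (auto simp: CZ)
    also have "\<dots> = (if f k < nc then C $$ (k,l) else 0)"
      using k by (cases "f k < nc") auto
    also have "\<dots> = C $$ (k,l)"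
      using piv(1)[of k] piv(2)[of k l] C k l by (cases "f k < nc") auto
    finally show "(C * Z * C) $$ (k,l) = C $$ (k,l)" .
  qed (use C Z in auto)
  with Z show ?thesis by auto
qed

lemma generalized_inverse_exists:
  fixes A :: "'a :: field mat"
  assumes A: "A \<in> carrier_mat nr nc"
  shows "\<exists>Z \<in> carrier_mat nc nr. A * Z * A = A"
proof -
  define C where "C = gauss_jordan_single A"
  note gj = gauss_jordan_single[OF A C_def[symmetric]]
  have C: "C \<in> carrier_mat nr nc" using gj(2) .
  obtain f where "pivot_fun C f nc" using gj(3) C unfolding row_echelon_form_def by auto
  then obtain Y where Y: "Y \<in> carrier_mat nc nr" and CYC: "C * Y * C = C"
    using row_echelon_generalized_inverse[OF C] by auto
  obtain P Q where CPA: "C = P * A" and P: "P \<in> carrier_mat nr nr" and Q: "Q \<in> carrier_mat nr nr"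
    and QP: "Q * P = 1\<^sub>m nr" and PQ: "P * Q = 1\<^sub>m nr" using gj(4) by auto
  have QC: "Q * C = A" unfolding CPA using P Q A QP by (metis assoc_mult_mat left_mult_one_mat)
  have "A * (Y * P) * A = Q * (C * Y * (P * Q) * C)"
    unfolding QC[symmetric] using Q C Y P by (simp add: assoc_mult_mat_dim)
  also have "\<dots> = A" using PQ CYC QC C Y by simp
  finally show ?thesis using Y P by (intro bexI[of _ "Y * P"]) auto
qed

lemma transpose_mult_self_eq_zero:
  fixes D :: "real mat"
  assumes D: "D \<in> carrier_mat r c" and z: "transpose_mat D * D = 0\<^sub>m c c"
  shows "D = 0\<^sub>m r c"
proof (rule eq_matI)
  fix i j assume "i < dim_row (0\<^sub>m r c)" and "j < dim_col (0\<^sub>m r c)"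
  hence i: "i < r" and j: "j < c" by auto
  have "(transpose_mat D * D) $$ (j,j) = (\<Sum>l<r. transpose_mat D $$ (j,l) * D $$ (l,j))"
    using D j by (intro index_mult_mat_sum) auto
  hence "(\<Sum>l<r. D $$ (l,j) * D $$ (l,j)) = (transpose_mat D * D) $$ (j,j)"
    using D j by simp
  also have "\<dots> = 0" using z j by simp
  finally have "\<forall>l\<in>{..<r}. D $$ (l,j) * D $$ (l,j) = 0"
    by (subst (asm) sum_nonneg_eq_0_iff) auto
  thus "D $$ (i,j) = 0\<^sub>m r c $$ (i,j)" using i j by simp
qed (use D in auto)

lemma transpose_mult_cancel:
  fixes B W1 W2 :: "real mat"
  assumes B: "B \<in> carrier_mat r c" and W1: "W1 \<in> carrier_mat c k" and W2: "W2 \<in> carrier_mat c k"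
    and eq: "transpose_mat B * (B * W1) = transpose_mat B * (B * W2)"
  shows "B * W1 = B * W2"
proof -
  define D where "D = B * (W1 - W2)"
  have D: "D \<in> carrier_mat r k" unfolding D_def using B W2 by auto
  have DW: "D = B * W1 - B * W2" unfolding D_def by (rule mult_minus_distrib_mat[OF B W1 W2])
  have "transpose_mat B * D = transpose_mat B * (B * W1) - transpose_mat B * (B * W2)"
    unfolding DW using B W1 W2 by (intro mult_minus_distrib_mat) auto
  hence "transpose_mat B * D = 0\<^sub>m c k" using eq B W2 by simp
  moreover have "transpose_mat D * D = transpose_mat (W1 - W2) * (transpose_mat B * D)"
    unfolding D_def using B W1 W2 by (simp add: transpose_mult_dim assoc_mult_mat_dim)
  ultimately have "transpose_mat D * D = 0\<^sub>m k k" using W2 by simp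
  hence D0: "D = 0\<^sub>m r k" by (rule transpose_mult_self_eq_zero[OF D])
  show ?thesis
  proof (rule eq_matI)
    fix i j assume "i < dim_row (B * W2)" and "j < dim_col (B * W2)"
    hence "i < r" and "j < k" using B W2 by auto
    moreover have "(B * W1 - B * W2) $$ (i,j) = 0\<^sub>m r k $$ (i,j)" using D0 DW by simp
    ultimately show "(B * W1) $$ (i,j) = (B * W2) $$ (i,j)" using B W1 W2 by simp
  qed (use B W1 W2 in auto)
qed

lemma gram_generalized_inverse:
  fixes A Z :: "real mat"
  assumes A: "A \<in> carrier_mat m n" and Z: "Z \<in> carrier_mat n n"
    and g: "transpose_mat A * A * Z * (transpose_mat A * A) = transpose_mat A * A"
  shows "A * Z * transpose_mat A * A = A"
    and "transpose_mat (A * Z * transpose_mat A) = A * Z * transpose_mat A"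
proof -
  have "transpose_mat A * (A * (Z * (transpose_mat A * A))) = transpose_mat A * (A * 1\<^sub>m n)"
    using g A Z by (simp add: assoc_mult_mat_dim)
  hence "A * (Z * (transpose_mat A * A)) = A * 1\<^sub>m n"
    using A Z by (intro transpose_mult_cancel[of A m n]) auto
  thus AZA: "A * Z * transpose_mat A * A = A"
    using A Z by (simp add: assoc_mult_mat_dim)
  hence "transpose_mat (A * Z * transpose_mat A * A) = transpose_mat A" by simp
  hence AZA': "transpose_mat A * A * transpose_mat Z * transpose_mat A = transpose_mat A"
    using A Z by (simp add: transpose_mult_dim assoc_mult_mat_dim)
  have "A * Z * transpose_mat A = A * Z * (transpose_mat A * A * transpose_mat Z * transpose_mat A)"
    by (simp only: AZA')
  also have "\<dots> = (A * Z * transpose_mat A * A) * transpose_mat Z * transpose_mat A"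
    using A Z by (simp add: assoc_mult_mat_dim)
  also have "\<dots> = A * transpose_mat Z * transpose_mat A" by (simp only: AZA)
  also have "\<dots> = transpose_mat (A * Z * transpose_mat A)"
    using A Z by (simp add: transpose_mult_dim assoc_mult_mat_dim)
  finally show "transpose_mat (A * Z * transpose_mat A) = A * Z * transpose_mat A" by simp
qed

lemma is_mp_inverse_exists:
  fixes A :: "real mat"
  assumes A: "A \<in> carrier_mat m n"
  shows "\<exists>X. is_mp_inverse A X"
proof -
  \<comment> \<open>A^+ = A^T (A A^T)^- A (A^T A)^- A^T for arbitrary generalised inverses (-)\<close>
  let ?At = "transpose_mat A"
  obtain Z where Z: "Z \<in> carrier_mat n n" and gZ: "?At * A * Z * (?At * A) = ?At * A"
    using generalized_inverse_exists[of "?At * A" n n] A by auto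
  note P = gram_generalized_inverse[OF A Z gZ]
  obtain Y where Y: "Y \<in> carrier_mat m m" and
    gY: "transpose_mat ?At * ?At * Y * (transpose_mat ?At * ?At) = transpose_mat ?At * ?At"
    using generalized_inverse_exists[of "A * ?At" m m] A by auto
  have At: "?At \<in> carrier_mat n m" using A by simp
  note Q = gram_generalized_inverse[OF At Y gY, unfolded transpose_transpose]
  have AQ: "A * (?At * Y * A) = A"
  proof -
    have "transpose_mat (?At * Y * A * ?At) = A" using Q(1) A by simp
    thus ?thesis using Q(2) A Y by (simp add: transpose_mult_dim)
  qed
  define X where "X = ?At * Y * A * Z * ?At"
  have "A * X = A * (?At * Y * A) * Z * ?At"
    using A Y Z unfolding X_def by (simp add: assoc_mult_mat_dim)
  hence AX: "A * X = A * Z * ?At" unfolding AQ .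
  have XA: "X * A = ?At * Y * A"
    using P(1) A Y Z unfolding X_def by (simp add: assoc_mult_mat_dim)
  have "X * A * X = (?At * Y * A * ?At) * (Y * A * Z * ?At)"
    using A Y Z unfolding XA by (simp add: X_def assoc_mult_mat_dim)
  also have "\<dots> = X" using A Y Z unfolding Q(1) X_def by (simp add: assoc_mult_mat_dim)
  finally have "X * A * X = X" .
  moreover have "X \<in> carrier_mat n m" using A Y Z unfolding X_def by auto
  ultimately have "is_mp_inverse A X"
    unfolding is_mp_inverse_def using A AX XA P Q by (simp add: assoc_mult_mat_dim)
  thus ?thesis by blast
qed

lemma is_mp_inverse_unique:
  fixes A X Y :: "real mat"
  assumes X: "is_mp_inverse A X" and Y: "is_mp_inverse A Y"
  shows "X = Y"
proof -
  obtain m n where A: "A \<in> carrier_mat m n" by blast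
  have Xc: "X \<in> carrier_mat n m" and Yc: "Y \<in> carrier_mat n m"
    using X Y A unfolding is_mp_inverse_def by auto
  note x = X[unfolded is_mp_inverse_def] and y = Y[unfolded is_mp_inverse_def]
  have "X = X * transpose_mat (A * X)" using x Xc A by (simp add: assoc_mult_mat_dim)
  also have "\<dots> = X * transpose_mat (A * Y * A * X)" using y by simp
  also have "\<dots> = X * transpose_mat (A * X) * transpose_mat (A * Y)"
    using Xc Yc A by (simp add: transpose_mult_dim assoc_mult_mat_dim)
  also have "\<dots> = X * A * Y" using x y Xc Yc A by (simp add: assoc_mult_mat_dim)
  finally have XAY: "X = X * A * Y" .
  have "Y = transpose_mat (Y * A) * Y" using y by simp
  also have "\<dots> = transpose_mat (Y * (A * X * A)) * Y" using x by simp
  also have "\<dots> = transpose_mat (X * A) * transpose_mat (Y * A) * Y"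
    using Xc Yc A by (simp add: transpose_mult_dim assoc_mult_mat_dim)
  also have "\<dots> = X * A * Y" using x y Xc Yc A by (simp add: assoc_mult_mat_dim)
  finally show ?thesis using XAY by simp
qed

lemma is_mp_inverse_mp_inverse: "is_mp_inverse A (mp_inverse A)"
proof -
  obtain X where X: "is_mp_inverse A X" using is_mp_inverse_exists[of A] by blast
  show ?thesis
    unfolding mp_inverse_def by (rule theI[of "is_mp_inverse A", OF X is_mp_inverse_unique[OF _ X]])
qed

lemma mp_inverse_carrier: "A \<in> carrier_mat m n \<Longrightarrow> mp_inverse A \<in> carrier_mat n m"
  using is_mp_inverse_mp_inverse[of A] unfolding is_mp_inverse_def by auto

lemma mp_inverse_penrose:
  fixes A :: "real mat"
  shows "A * mp_inverse A * A = A"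
    and "mp_inverse A * A * mp_inverse A = mp_inverse A"
    and "transpose_mat (A * mp_inverse A) = A * mp_inverse A"
    and "transpose_mat (mp_inverse A * A) = mp_inverse A * A"
  using is_mp_inverse_mp_inverse[of A] unfolding is_mp_inverse_def by auto

subsection \<open>Proper splittings\<close>

lemma mult_unit_vec_col:
  fixes X :: "'a :: semiring_1 mat"
  assumes "j < dim_col X"
  shows "X *\<^sub>v unit_vec (dim_col X) j = col X j"
  using assms by (intro eq_vecI) (auto simp: scalar_prod_right_unit)

lemma generalized_inverse_fixes_col_range:
  fixes X Y W :: "real mat"
  assumes Y: "Y \<in> carrier_mat m k" and X: "X \<in> carrier_mat m l" and W: "W \<in> carrier_mat k m"
    and YWY: "Y * W * Y = Y" and sub: "col_range X \<subseteq> col_range Y"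
  shows "Y * W * X = X"
proof (rule mat_col_eqI)
  fix j assume j: "j < dim_col X"
  have "col X j \<in> col_range X"
    unfolding col_range_def using mult_unit_vec_col[OF j]
    by (intro CollectI exI[of _ "unit_vec (dim_col X) j"]) auto
  with sub obtain x where x: "x \<in> carrier_vec k" and Xj: "col X j = Y *\<^sub>v x"
    unfolding col_range_def using Y by auto
  have "col (Y * W * X) j = (Y * W) *\<^sub>v (Y *\<^sub>v x)"
    unfolding Xj[symmetric] using Y W X j by (intro col_mult2[of _ m m]) auto
  also have "\<dots> = (Y * W * Y) *\<^sub>v x" using Y W x by (simp add: assoc_mult_mat_vec_dim)
  finally show "col (Y * W * X) j = col X j" unfolding YWY Xj .
qed (use X Y W in auto)

lemma minus_eq_zero_vec_imp_eq:
  fixes a b :: "'a :: ab_group_add vec"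
  assumes "a \<in> carrier_vec n" and "b \<in> carrier_vec n" and "a - b = 0\<^sub>v n"
  shows "a = b"
proof (rule eq_vecI)
  fix i assume "i < dim_vec b"
  hence "a $ i - b $ i = 0\<^sub>v n $ i" and "i < n"
    using assms index_minus_vec(1)[of i b a] by auto
  thus "a $ i = b $ i" by simp
qed (use assms in auto)

lemma generalized_inverse_fixes_null_space:
  fixes X Y W :: "real mat"
  assumes Y: "Y \<in> carrier_mat m k" and X: "X \<in> carrier_mat l k" and W: "W \<in> carrier_mat k m"
    and YWY: "Y * W * Y = Y" and sub: "null_space Y \<subseteq> null_space X"
  shows "X * W * Y = X"
proof (rule mat_col_eqI)
  fix j assume "j < dim_col X"
  hence j: "j < k" using X by simp
  define e where "e = (unit_vec k j :: real vec)"
  define u where "u = e - W *\<^sub>v (Y *\<^sub>v e)"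
  have e: "e \<in> carrier_vec k" unfolding e_def by simp
  have u: "u \<in> carrier_vec k" unfolding u_def using W Y e by simp
  have "Y *\<^sub>v (W *\<^sub>v (Y *\<^sub>v e)) = Y *\<^sub>v e"
    using arg_cong[OF YWY, of "\<lambda>M. M *\<^sub>v e"] Y W e by (simp add: assoc_mult_mat_vec_dim)
  hence "Y *\<^sub>v u = 0\<^sub>v m"
    unfolding u_def using Y W e by (simp add: mult_minus_distrib_mat_vec)
  hence "u \<in> null_space Y" using u Y unfolding null_space_def by simp
  hence uX: "u \<in> null_space X" using sub by blast
  have "X *\<^sub>v e - X *\<^sub>v (W *\<^sub>v (Y *\<^sub>v e)) = X *\<^sub>v u"
    unfolding u_def using X W Y e by (intro mult_minus_distrib_mat_vec[symmetric]) auto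
  also have "\<dots> = 0\<^sub>v l" using uX carrier_matD[OF X] unfolding null_space_def by simp
  finally have "X *\<^sub>v e - X *\<^sub>v (W *\<^sub>v (Y *\<^sub>v e)) = 0\<^sub>v l" .
  hence "X *\<^sub>v e = X *\<^sub>v (W *\<^sub>v (Y *\<^sub>v e))"
    by (rule minus_eq_zero_vec_imp_eq[of _ l, rotated 2]) (use X W Y e in simp_all)
  also have "\<dots> = (X * W * Y) *\<^sub>v e" using X W Y e by (simp add: assoc_mult_mat_vec_dim)
  finally have eq: "(X * W * Y) *\<^sub>v unit_vec (dim_col (X * W * Y)) j = X *\<^sub>v unit_vec (dim_col X) j"
    unfolding e_def using X Y by simp
  have "col (X * W * Y) j = (X * W * Y) *\<^sub>v unit_vec (dim_col (X * W * Y)) j"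
    by (rule mult_unit_vec_col[symmetric]) (use X Y j in simp)
  also have "\<dots> = col X j"
    unfolding eq by (rule mult_unit_vec_col) (use X j in simp)
  finally show "col (X * W * Y) j = col X j" .
qed (use X Y W in auto)

lemma proper_splitting_projections:
  fixes A U V :: "real mat"
  assumes A: "A \<in> carrier_mat m n" and ps: "proper_splitting A U V"
  shows "U * mp_inverse U = A * mp_inverse A" and "mp_inverse U * U = mp_inverse A * A"
proof -
  let ?Ud = "mp_inverse U" and ?Ad = "mp_inverse A"
  have U: "U \<in> carrier_mat m n" using ps A unfolding proper_splitting_def by simp
  have Ud: "?Ud \<in> carrier_mat n m" and Ad: "?Ad \<in> carrier_mat n m"
    using mp_inverse_carrier U A by auto
  note u = mp_inverse_penrose[of U] and a = mp_inverse_penrose[of A]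
  have cr: "col_range U = col_range A" and ns: "null_space U = null_space A"
    using ps unfolding proper_splitting_def by auto
  have UUdA: "U * ?Ud * A = A" and AAdU: "A * ?Ad * U = U"
    using generalized_inverse_fixes_col_range[OF U A Ud u(1)]
      generalized_inverse_fixes_col_range[OF A U Ad a(1)] cr by auto
  have "A * ?Ad * (U * ?Ud) = A * ?Ad * U * ?Ud" and "U * ?Ud * (A * ?Ad) = U * ?Ud * A * ?Ad"
    using U A Ud Ad by (simp_all add: assoc_mult_mat_dim)
  hence QP: "A * ?Ad * (U * ?Ud) = U * ?Ud" and PQ: "U * ?Ud * (A * ?Ad) = A * ?Ad"
    unfolding UUdA AAdU .
  have "U * ?Ud = transpose_mat (A * ?Ad * (U * ?Ud))" by (simp only: QP u(3))
  also have "\<dots> = transpose_mat (U * ?Ud) * transpose_mat (A * ?Ad)"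
    using U A Ud Ad by (intro transpose_mult_dim) simp
  also have "\<dots> = A * ?Ad" by (simp only: u(3) a(3) PQ)
  finally show "U * ?Ud = A * ?Ad" .
  have UAdA: "U * ?Ad * A = U" and AUdU: "A * ?Ud * U = A"
    using generalized_inverse_fixes_null_space[OF A U Ad a(1)]
      generalized_inverse_fixes_null_space[OF U A Ud u(1)] ns by auto
  have "?Ud * U * (?Ad * A) = ?Ud * (U * ?Ad * A)" and "?Ad * A * (?Ud * U) = ?Ad * (A * ?Ud * U)"
    using U A Ud Ad by (simp_all add: assoc_mult_mat_dim)
  hence PQ': "?Ud * U * (?Ad * A) = ?Ud * U" and QP': "?Ad * A * (?Ud * U) = ?Ad * A"
    unfolding UAdA AUdU .
  have "?Ud * U = transpose_mat (?Ud * U * (?Ad * A))" by (simp only: PQ' u(4))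
  also have "\<dots> = transpose_mat (?Ad * A) * transpose_mat (?Ud * U)"
    using U A Ud Ad by (intro transpose_mult_dim) simp
  also have "\<dots> = ?Ad * A" by (simp only: u(4) a(4) QP')
  finally show "?Ud * U = ?Ad * A" .
qed

lemma proper_splitting_mp_absorb:
  fixes A U V :: "real mat"
  assumes A: "A \<in> carrier_mat m n" and ps: "proper_splitting A U V"
  shows "mp_inverse U * U * mp_inverse A = mp_inverse A"
    and "mp_inverse A * A * mp_inverse U = mp_inverse U"
    and "mp_inverse U * A * mp_inverse A = mp_inverse U"
    and "mp_inverse A * U * mp_inverse U = mp_inverse A"
proof -
  let ?Ud = "mp_inverse U" and ?Ad = "mp_inverse A"
  have U: "U \<in> carrier_mat m n" using ps A unfolding proper_splitting_def by simp
  have Ud: "?Ud \<in> carrier_mat n m" and Ad: "?Ad \<in> carrier_mat n m"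
    using mp_inverse_carrier U A by auto
  note u = mp_inverse_penrose[of U] and a = mp_inverse_penrose[of A]
  note P = proper_splitting_projections[OF A ps]
  show "?Ud * U * ?Ad = ?Ad" by (simp only: P(2) a(2))
  show "?Ad * A * ?Ud = ?Ud" by (simp only: P(2)[symmetric] u(2))
  have "?Ud * A * ?Ad = ?Ud * (U * ?Ud)" using Ud A Ad by (simp add: assoc_mult_mat_dim P(1))
  also have "\<dots> = ?Ud" using Ud U u(2) by (simp add: assoc_mult_mat_dim)
  finally show "?Ud * A * ?Ad = ?Ud" .
  have "?Ad * U * ?Ud = ?Ad * (A * ?Ad)" using Ad U Ud by (simp add: assoc_mult_mat_dim P(1))
  also have "\<dots> = ?Ad" using Ad A a(2) by (simp add: assoc_mult_mat_dim)
  finally show "?Ad * U * ?Ud = ?Ad" .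
qed

lemma proper_splitting_mp_identities:
  fixes A U V :: "real mat"
  assumes A: "A \<in> carrier_mat m n" and ps: "proper_splitting A U V"
  shows "mp_inverse U * V * mp_inverse A = mp_inverse A - mp_inverse U"
    and "mp_inverse A * (V * mp_inverse U) = mp_inverse A - mp_inverse U"
    and "mp_inverse A * (A * (mp_inverse U * V)) = mp_inverse U * V"
    and "V * mp_inverse U * A * mp_inverse A = V * mp_inverse U"
proof -
  let ?Ud = "mp_inverse U" and ?Ad = "mp_inverse A"
  have U: "U \<in> carrier_mat m n" and V: "V \<in> carrier_mat m n"
    using ps A unfolding proper_splitting_def by auto
  have "A = U - V" using ps unfolding proper_splitting_def by simp
  hence VUA: "V = U - A" using U V by (intro eq_matI) auto
  have Ud: "?Ud \<in> carrier_mat n m" and Ad: "?Ad \<in> carrier_mat n m"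
    using mp_inverse_carrier U A by auto
  note absorb = proper_splitting_mp_absorb[OF A ps]
  have "?Ud * V * ?Ad = (?Ud * U - ?Ud * A) * ?Ad"
    unfolding VUA mult_minus_distrib_mat[OF Ud U A] ..
  also have "\<dots> = ?Ud * U * ?Ad - ?Ud * A * ?Ad"
    using Ud U A Ad by (intro minus_mult_distrib_mat[of _ n n]) auto
  finally show "?Ud * V * ?Ad = ?Ad - ?Ud" unfolding absorb .
  have "?Ad * (V * ?Ud) = ?Ad * (U * ?Ud - A * ?Ud)"
    unfolding VUA minus_mult_distrib_mat[OF U A Ud] ..
  also have "\<dots> = ?Ad * (U * ?Ud) - ?Ad * (A * ?Ud)"
    using Ud U A Ad by (intro mult_minus_distrib_mat[of _ n m]) auto
  also have "\<dots> = ?Ad * U * ?Ud - ?Ad * A * ?Ud"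
    unfolding assoc_mult_mat[OF Ad U Ud] assoc_mult_mat[OF Ad A Ud] ..
  finally show "?Ad * (V * ?Ud) = ?Ad - ?Ud" unfolding absorb .
  have "?Ad * (A * (?Ud * V)) = ?Ad * A * ?Ud * V"
    using Ad A Ud V by (simp add: assoc_mult_mat_dim)
  thus "?Ad * (A * (?Ud * V)) = ?Ud * V" unfolding absorb .
  have "V * ?Ud * A * ?Ad = V * (?Ud * A * ?Ad)"
    using Ad A Ud V by (simp add: assoc_mult_mat_dim)
  thus "V * ?Ud * A * ?Ad = V * ?Ud" unfolding absorb .
qed

lemma proper_splitting_intertwining:
  fixes A U V :: "real mat"
  assumes A: "A \<in> carrier_mat m n" and ps: "proper_splitting A U V"
  shows "mp_inverse U * V = - mp_inverse A * - (A * (mp_inverse U * V))"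
    and "V * mp_inverse U = - (V * mp_inverse U * A) * - mp_inverse A"
    and "mp_inverse U * V * - mp_inverse A = mp_inverse U - mp_inverse A"
    and "- mp_inverse A * (V * mp_inverse U) = mp_inverse U - mp_inverse A"
proof -
  have U: "U \<in> carrier_mat m n" and V: "V \<in> carrier_mat m n"
    using ps A unfolding proper_splitting_def by auto
  have Ud: "mp_inverse U \<in> carrier_mat n m" and Ad: "mp_inverse A \<in> carrier_mat n m"
    using mp_inverse_carrier U A by auto
  note e = proper_splitting_mp_identities[OF A ps]
  show "mp_inverse U * V = - mp_inverse A * - (A * (mp_inverse U * V))"
    using e(3) A V Ud Ad by simp
  show "V * mp_inverse U = - (V * mp_inverse U * A) * - mp_inverse A"
    using e(4) A V Ud Ad by simp
  show "mp_inverse U * V * - mp_inverse A = mp_inverse U - mp_inverse A"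
    using e(1) uminus_minus_mat[OF Ad Ud] V Ud Ad by simp
  show "- mp_inverse A * (V * mp_inverse U) = mp_inverse U - mp_inverse A"
    using e(2) uminus_minus_mat[OF Ad Ud] V Ud Ad by simp
qed

subsection \<open>Spectral radius\<close>

abbreviation cmat :: "real mat \<Rightarrow> complex mat" where
  "cmat M \<equiv> map_mat complex_of_real M"

lemma cmat_smult: "cmat (c \<cdot>\<^sub>m M) = complex_of_real c \<cdot>\<^sub>m cmat M"
  by (intro eq_matI) auto

lemma rho_attained:
  assumes M: "M \<in> carrier_mat k k" and k: "k > 0"
  shows "\<exists>l. eigenvalue (cmat M) l \<and> norm l = rho M"
proof -
  have "rho M \<in> norm ` spectrum (cmat M)"
    unfolding rho_def using M k by (intro spectral_radius_mem_max(1)) auto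
  thus ?thesis unfolding spectrum_def by auto
qed

lemma norm_eigenvalue_le_rho:
  assumes M: "M \<in> carrier_mat k k" and ev: "eigenvalue (cmat M) l"
  shows "norm l \<le> rho M"
proof -
  have M': "cmat M \<in> carrier_mat k k" using M by simp
  show ?thesis unfolding rho_def
    using spectral_radius_mem_max(2)[OF M' eigenvalue_imp_nonzero_dim[OF M' ev]] ev
    by (auto simp: spectrum_def)
qed

lemma rho_nonneg:
  assumes "M \<in> carrier_mat k k" and "k > 0"
  shows "0 \<le> rho M"
proof -
  obtain l :: complex where "norm l = rho M" using rho_attained[OF assms] by blast
  thus ?thesis by (metis norm_ge_zero)
qed

lemma rho_transpose:
  assumes M: "M \<in> carrier_mat k k"
  shows "rho (transpose_mat M) = rho M"
proof -
  have M': "cmat M \<in> carrier_mat k k" using M by simp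
  have "spectrum (transpose_mat (cmat M)) = spectrum (cmat M)"
    unfolding spectrum_def using eigenvalue_root_char_poly[OF M']
      eigenvalue_root_char_poly[of "transpose_mat (cmat M)" k] M' by auto
  thus ?thesis unfolding rho_def spectral_radius_def by (simp add: map_mat_transpose)
qed

lemma eigenvalue_mult_commute:
  fixes X Y :: "real mat"
  assumes X: "X \<in> carrier_mat n m" and Y: "Y \<in> carrier_mat m n"
    and ev: "eigenvalue (cmat (X * Y)) l" and l: "l \<noteq> 0"
  shows "eigenvalue (cmat (Y * X)) l"
proof -
  have X': "cmat X \<in> carrier_mat n m" and Y': "cmat Y \<in> carrier_mat m n" using X Y by auto
  obtain v where v: "v \<in> carrier_vec n" "v \<noteq> 0\<^sub>v n" and Xv: "cmat X *\<^sub>v (cmat Y *\<^sub>v v) = l \<cdot>\<^sub>v v"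
    using ev X' Y' unfolding eigenvalue_def eigenvector_def of_real_hom.mat_hom_mult[OF X Y] by auto
  define w where "w = cmat Y *\<^sub>v v"
  have w: "w \<in> carrier_vec m" unfolding w_def using Y' v by simp
  have "w \<noteq> 0\<^sub>v m"
  proof
    assume "w = 0\<^sub>v m"
    have "l \<cdot>\<^sub>v v = cmat X *\<^sub>v w" using Xv unfolding w_def ..
    also have "\<dots> = 0\<^sub>v n" using X' \<open>w = 0\<^sub>v m\<close> by (intro eq_vecI) auto
    finally have lv: "l \<cdot>\<^sub>v v = 0\<^sub>v n" .
    have "v = 0\<^sub>v n"
    proof (rule eq_vecI)
      fix i assume i: "i < dim_vec (0\<^sub>v n :: complex vec)"
      hence "l * v $ i = 0" using arg_cong[OF lv, of "\<lambda>x. x $ i"] v(1) by simp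
      thus "v $ i = 0\<^sub>v n $ i" using l i by simp
    qed (use v(1) in simp)
    thus False using v(2) by blast
  qed
  moreover have "cmat (Y * X) *\<^sub>v w = l \<cdot>\<^sub>v w"
    using Xv X' Y' v unfolding w_def of_real_hom.mat_hom_mult[OF Y X] by (simp add: mult_mat_vec)
  ultimately show ?thesis
    unfolding eigenvalue_def eigenvector_def using w X Y by auto
qed

lemma rho_mult_commute:
  fixes X Y :: "real mat"
  assumes X: "X \<in> carrier_mat n m" and Y: "Y \<in> carrier_mat m n" and "n > 0" and "m > 0"
  shows "rho (X * Y) = rho (Y * X)"
proof -
  have le: "rho (X * Y) \<le> rho (Y * X)"
    if X: "X \<in> carrier_mat n m" and Y: "Y \<in> carrier_mat m n" and "n > 0" and "m > 0"
    for X Y :: "real mat" and n m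
  proof -
    obtain l where ev: "eigenvalue (cmat (X * Y)) l" and l: "norm l = rho (X * Y)"
      using rho_attained[of "X * Y" n] X Y \<open>n > 0\<close> by auto
    show ?thesis
    proof (cases "l = 0")
      case True
      thus ?thesis using l rho_nonneg[of "Y * X" m] X Y \<open>m > 0\<close> by simp
    next
      case False
      have "norm l \<le> rho (Y * X)"
        by (rule norm_eigenvalue_le_rho[of _ m]) (use X Y eigenvalue_mult_commute[OF X Y ev False] in auto)
      thus ?thesis using l by simp
    qed
  qed
  show ?thesis using le[OF X Y] le[OF Y X] assms by fastforce
qed

lemma smult_mult_mat_vec:
  fixes A :: "'a :: comm_semiring_0 mat"
  assumes "A \<in> carrier_mat nr nc" and "v \<in> carrier_vec nc"
  shows "(k \<cdot>\<^sub>m A) *\<^sub>v v = k \<cdot>\<^sub>v (A *\<^sub>v v)"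
  using assms by (intro eq_vecI) (auto simp: scalar_prod_def sum_distrib_left mult.assoc)

lemma smult_pow_mat:
  fixes A :: "'a :: comm_semiring_1 mat"
  assumes A: "A \<in> carrier_mat n n"
  shows "(k \<cdot>\<^sub>m A) ^\<^sub>m i = k ^ i \<cdot>\<^sub>m (A ^\<^sub>m i)"
proof (induction i)
  case (Suc i)
  show ?case unfolding pow_mat.simps(2) Suc.IH using A
    by (intro eq_matI) (auto simp: scalar_prod_def sum_distrib_left ac_simps)
qed (use A in \<open>auto intro: eq_matI\<close>)

lemma power_entries_bound_of_rho_less:
  fixes S :: "real mat"
  assumes S: "S \<in> carrier_mat m m" and r: "r > 0" and rS: "rho S < r"
  shows "\<exists>C. \<forall>k l j. l < m \<longrightarrow> j < m \<longrightarrow> \<bar>(S ^\<^sub>m k) $$ (l,j)\<bar> \<le> C * r ^ k"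
proof (cases "m = 0")
  case False
  define B where "B = complex_of_real (1 / r) \<cdot>\<^sub>m cmat S"
  have B: "B \<in> carrier_mat m m" unfolding B_def using S by simp
  have "norm \<mu> < 1" if mu: "\<mu> \<in> spectrum B" for \<mu>
  proof -
    obtain v where v: "eigenvector B v \<mu>" using mu unfolding spectrum_def eigenvalue_def by auto
    have "cmat S = complex_of_real r \<cdot>\<^sub>m B"
      unfolding B_def using r by (intro eq_matI) auto
    hence "eigenvector (cmat S) v (complex_of_real r * \<mu>)"
      using v B unfolding eigenvector_def by (auto simp: smult_mult_mat_vec smult_smult_assoc)
    hence "r * norm \<mu> \<le> rho S"
      using norm_eigenvalue_le_rho[OF S] r unfolding eigenvalue_def by (fastforce simp: norm_mult)
    hence "r * norm \<mu> < r * 1" using rS by simp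
    thus ?thesis using r by (simp only: mult_less_cancel_left_pos)
  qed
  hence "spectral_radius B < 1"
    using spectral_radius_mem_max(1)[OF B] False by auto
  then obtain C where C: "\<And>k. norm_bound (B ^\<^sub>m k) C"
    using spectral_radius_jnf_norm_bound_less_1_upper_triangular[OF B] by auto
  have "\<bar>(S ^\<^sub>m k) $$ (l,j)\<bar> \<le> C * r ^ k" if "l < m" and "j < m" for k l j
  proof -
    have "B ^\<^sub>m k = complex_of_real (1 / r ^ k) \<cdot>\<^sub>m cmat (S ^\<^sub>m k)"
      unfolding B_def of_real_hom.mat_hom_pow[OF S] using S
      by (intro eq_matI) (auto simp: smult_pow_mat power_divide)
    hence "(B ^\<^sub>m k) $$ (l,j) = complex_of_real ((S ^\<^sub>m k) $$ (l,j) / r ^ k)"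
      using that S by simp
    moreover have "norm ((B ^\<^sub>m k) $$ (l,j)) \<le> C"
      using C[of k] that B unfolding norm_bound_def by auto
    ultimately have "norm (complex_of_real ((S ^\<^sub>m k) $$ (l,j) / r ^ k)) \<le> C" by metis
    hence "\<bar>(S ^\<^sub>m k) $$ (l,j)\<bar> / r ^ k \<le> C"
      using r by (simp only: norm_of_real abs_divide power_abs abs_of_pos)
    thus ?thesis using r by (simp add: divide_le_eq)
  qed
  thus ?thesis by blast
qed simp

lemma le_rho_of_power_growth:
  fixes S :: "real mat" and a :: "nat \<Rightarrow> nat \<Rightarrow> real"
  assumes S: "S \<in> carrier_mat m m" and K: "K > 0"
    and a: "\<And>l j. l < m \<Longrightarrow> j < m \<Longrightarrow> 0 \<le> a l j"
    and growth: "\<And>k. c ^ k * K \<le> (\<Sum>l<m. \<Sum>j<m. a l j * (S ^\<^sub>m k) $$ (l,j))"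
  shows "c \<le> rho S"
proof (rule ccontr)
  assume "\<not> c \<le> rho S"
  have "m > 0" using growth[of 0] K by (cases m) auto
  hence rS: "0 \<le> rho S" "rho S < c" using rho_nonneg[OF S] \<open>\<not> c \<le> rho S\<close> by auto
  define r where "r = (rho S + c) / 2"
  have r: "0 < r" "rho S < r" "r < c" unfolding r_def using rS by auto
  obtain C where C: "\<And>k l j. l < m \<Longrightarrow> j < m \<Longrightarrow> \<bar>(S ^\<^sub>m k) $$ (l,j)\<bar> \<le> C * r ^ k"
    using power_entries_bound_of_rho_less[OF S r(1,2)] by auto
  define D where "D = (\<Sum>l<m. \<Sum>j<m. a l j) * C"
  have "(c / r) ^ k \<le> D / K" for k
  proof -
    have rk: "0 < r ^ k" using r by simp
    have "c ^ k * K \<le> (\<Sum>l<m. \<Sum>j<m. a l j * (S ^\<^sub>m k) $$ (l,j))" by (rule growth)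
    also have "\<dots> \<le> (\<Sum>l<m. \<Sum>j<m. a l j * (C * r ^ k))"
      by (intro sum_mono mult_left_mono) (simp_all add: a abs_le_D1[OF C])
    also have "\<dots> = D * r ^ k" unfolding D_def by (simp add: sum_distrib_right mult.assoc)
    finally have "c ^ k * K / r ^ k \<le> D" by (simp only: pos_divide_le_eq[OF rk])
    moreover have "(c / r) ^ k * K = c ^ k * K / r ^ k" by (simp add: power_divide)
    ultimately show ?thesis by (simp only: pos_le_divide_eq[OF K])
  qed
  moreover have "1 < c / r" using r by simp
  from real_arch_pow[OF this] obtain k where "D / K < (c / r) ^ k" ..
  ultimately show False by (meson not_le)
qed

subsection \<open>Nonnegative matrices and intertwining inequalities\<close>

lemma mat_leI:
  assumes "X \<in> carrier_mat n m" and "Y \<in> carrier_mat n m"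
    and "\<And>i j. i < n \<Longrightarrow> j < m \<Longrightarrow> X $$ (i,j) \<le> Y $$ (i,j)"
  shows "mat_le X Y"
  using assms unfolding mat_le_def by auto

lemma mat_ltI:
  assumes "X \<in> carrier_mat n m" and "Y \<in> carrier_mat n m"
    and "\<And>i j. i < n \<Longrightarrow> j < m \<Longrightarrow> X $$ (i,j) < Y $$ (i,j)"
  shows "mat_lt X Y"
  using assms unfolding mat_lt_def by auto

lemma mat_leD: "mat_le X Y \<Longrightarrow> i < dim_row X \<Longrightarrow> j < dim_col X \<Longrightarrow> X $$ (i,j) \<le> Y $$ (i,j)"
  unfolding mat_le_def by auto

lemma mat_ltD: "mat_lt X Y \<Longrightarrow> i < dim_row X \<Longrightarrow> j < dim_col X \<Longrightarrow> X $$ (i,j) < Y $$ (i,j)"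
  unfolding mat_lt_def by auto

lemma mat_le_refl: "mat_le X X"
  unfolding mat_le_def by auto

lemma mat_le_carrier: "mat_le (0\<^sub>m a b) A \<Longrightarrow> A \<in> carrier_mat a b"
  unfolding mat_le_def by auto

lemma mat_lt_imp_mat_le: "mat_lt X Y \<Longrightarrow> mat_le X Y"
  unfolding mat_lt_def mat_le_def by (auto intro: less_imp_le)

lemma mat_le_trans [trans]:
  assumes AB: "mat_le A B" and BC: "mat_le B C"
  shows "mat_le A C"
  unfolding mat_le_def
proof (intro conjI allI impI)
  fix i j assume i: "i < dim_row A" and j: "j < dim_col A"
  have "A $$ (i,j) \<le> B $$ (i,j)" using mat_leD[OF AB i j] .
  also have "\<dots> \<le> C $$ (i,j)" using AB i j by (intro mat_leD[OF BC]) (simp_all add: mat_le_def)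
  finally show "A $$ (i,j) \<le> C $$ (i,j)" .
qed (use AB BC in \<open>simp_all add: mat_le_def\<close>)

lemma mat_le_transpose: "mat_le X Y \<Longrightarrow> mat_le (transpose_mat X) (transpose_mat Y)"
  unfolding mat_le_def by auto

lemma mat_lt_transpose: "mat_lt X Y \<Longrightarrow> mat_lt (transpose_mat X) (transpose_mat Y)"
  unfolding mat_lt_def by auto

lemma nonneg_mult_mat:
  fixes A B :: "real mat"
  assumes A: "mat_le (0\<^sub>m a b) A" and B: "mat_le (0\<^sub>m b c) B"
  shows "mat_le (0\<^sub>m a c) (A * B)"
  unfolding mat_le_def
proof (intro conjI allI impI)
  fix i j assume "i < dim_row (0\<^sub>m a c :: real mat)" and "j < dim_col (0\<^sub>m a c :: real mat)"
  hence i: "i < a" and j: "j < c" by auto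
  have "(A * B) $$ (i,j) = (\<Sum>l<b. A $$ (i,l) * B $$ (l,j))"
    using mat_le_carrier[OF A] mat_le_carrier[OF B] i j by (rule index_mult_mat_sum)
  also have "\<dots> \<ge> 0"
    using A B i j unfolding mat_le_def by (intro sum_nonneg mult_nonneg_nonneg) auto
  finally show "0\<^sub>m a c $$ (i,j) \<le> (A * B) $$ (i,j)" using i j by simp
qed (use mat_le_carrier[OF A] mat_le_carrier[OF B] in auto)

lemma nonneg_pow_mat:
  fixes A :: "real mat"
  assumes A: "mat_le (0\<^sub>m n n) A"
  shows "mat_le (0\<^sub>m n n) (A ^\<^sub>m k)"
proof (induction k)
  case 0
  show ?case using mat_le_carrier[OF A] unfolding mat_le_def by auto
next
  case (Suc k)
  thus ?case using nonneg_mult_mat[OF Suc A] by simp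
qed

lemma mat_le_mult_left:
  fixes T B C :: "real mat"
  assumes T: "mat_le (0\<^sub>m a b) T" and le: "mat_le B C" and B: "dim_row B = b"
  shows "mat_le (T * B) (T * C)"
  unfolding mat_le_def
proof (intro conjI allI impI)
  have Tc: "T \<in> carrier_mat a b" using mat_le_carrier[OF T] .
  have Bc: "B \<in> carrier_mat b (dim_col B)" and Cc: "C \<in> carrier_mat b (dim_col B)"
    using le B unfolding mat_le_def by auto
  fix i j assume "i < dim_row (T * B)" and "j < dim_col (T * B)"
  hence i: "i < a" and j: "j < dim_col B" using Tc by auto
  have T0: "0 \<le> T $$ (i,l)" and BC: "B $$ (l,j) \<le> C $$ (l,j)" if "l \<in> {..<b}" for l
    using mat_leD[OF T, of i l] mat_leD[OF le, of l j] that i j B by simp_all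
  show "(T * B) $$ (i,j) \<le> (T * C) $$ (i,j)"
    unfolding index_mult_mat_sum[OF Tc Bc i j] index_mult_mat_sum[OF Tc Cc i j]
    by (intro sum_mono mult_left_mono T0 BC)
qed (use le in \<open>auto simp: mat_le_def\<close>)

lemma mat_le_mult_right:
  fixes S B C :: "real mat"
  assumes S: "mat_le (0\<^sub>m b c) S" and le: "mat_le B C" and B: "dim_col B = b"
  shows "mat_le (B * S) (C * S)"
  unfolding mat_le_def
proof (intro conjI allI impI)
  have Sc: "S \<in> carrier_mat b c" using mat_le_carrier[OF S] .
  have Bc: "B \<in> carrier_mat (dim_row B) b" and Cc: "C \<in> carrier_mat (dim_row B) b"
    using le B unfolding mat_le_def by auto
  fix i j assume "i < dim_row (B * S)" and "j < dim_col (B * S)"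
  hence i: "i < dim_row B" and j: "j < c" using Sc by auto
  have S0: "0 \<le> S $$ (l,j)" and BC: "B $$ (i,l) \<le> C $$ (i,l)" if "l \<in> {..<b}" for l
    using mat_leD[OF S, of l j] mat_leD[OF le, of i l] that i j B by simp_all
  show "(B * S) $$ (i,j) \<le> (C * S) $$ (i,j)"
    unfolding index_mult_mat_sum[OF Bc Sc i j] index_mult_mat_sum[OF Cc Sc i j]
    by (intro sum_mono mult_right_mono S0 BC)
qed (use le in \<open>auto simp: mat_le_def\<close>)

lemma intertwining_pow_mat_le:
  fixes T S N :: "real mat"
  assumes T: "mat_le (0\<^sub>m n n) T" and S: "mat_le (0\<^sub>m m m) S" and N: "N \<in> carrier_mat n m"
    and le: "mat_le (T * N) (N * S)"
  shows "mat_le (T ^\<^sub>m k * N) (N * S ^\<^sub>m k)"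
proof (induction k)
  case 0
  have "T ^\<^sub>m 0 * N = N" and "N * S ^\<^sub>m 0 = N"
    using N mat_le_carrier[OF T] mat_le_carrier[OF S] by auto
  thus ?case using mat_le_refl by metis
next
  case (Suc k)
  have Tc: "T \<in> carrier_mat n n" and Sc: "S \<in> carrier_mat m m"
    using mat_le_carrier T S by auto
  have "T ^\<^sub>m Suc k * N = T ^\<^sub>m k * (T * N)" using Tc N by (simp add: assoc_mult_mat_dim)
  also have "mat_le \<dots> (T ^\<^sub>m k * (N * S))"
    by (rule mat_le_mult_left[OF nonneg_pow_mat[OF T] le]) (use Tc N in simp)
  also have "T ^\<^sub>m k * (N * S) = T ^\<^sub>m k * N * S" using Tc N Sc by (simp add: assoc_mult_mat_dim)
  also have "mat_le \<dots> (N * S ^\<^sub>m k * S)"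
    by (rule mat_le_mult_right[OF S Suc]) (use Tc N in simp)
  also have "N * S ^\<^sub>m k * S = N * S ^\<^sub>m Suc k" using N Sc by (simp add: assoc_mult_mat_dim)
  finally show ?case .
qed

lemma mat_le_minus_right:
  assumes "mat_le X Y" and "Z \<in> carrier_mat (dim_row X) (dim_col X)"
  shows "mat_le (X - Z) (Y - Z)"
  using assms unfolding mat_le_def by auto

lemma mat_lt_minus_right:
  assumes "mat_lt X Y" and "Z \<in> carrier_mat (dim_row X) (dim_col X)"
  shows "mat_lt (X - Z) (Y - Z)"
  using assms unfolding mat_lt_def by auto

lemma mat_le_zero_uminus: "mat_le X (0\<^sub>m n m) \<Longrightarrow> mat_le (0\<^sub>m n m) (- X)"
  unfolding mat_le_def by auto

lemma mat_lt_zero_uminus: "mat_lt X (0\<^sub>m n m) \<Longrightarrow> mat_lt (0\<^sub>m n m) (- X)"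
  unfolding mat_lt_def by auto

subsection \<open>Comparison of spectral radii\<close>

lemma index_mult_mat_vec_sum:
  fixes A :: "'a :: semiring_0 mat"
  assumes "A \<in> carrier_mat nr nc" and "v \<in> carrier_vec nc" and "i < nr"
  shows "(A *\<^sub>v v) $ i = (\<Sum>j<nc. A $$ (i,j) * v $ j)"
  using assms by (auto simp: scalar_prod_def atLeast0LessThan intro!: sum.cong)

lemma nonzero_vec_has_nonzero_entry:
  fixes v :: "'a :: zero vec"
  assumes "v \<in> carrier_vec n" and "v \<noteq> 0\<^sub>v n"
  shows "\<exists>i<n. v $ i \<noteq> 0"
proof (rule ccontr)
  assume "\<not> (\<exists>i<n. v $ i \<noteq> 0)"
  hence "v = 0\<^sub>v n" using assms(1) by (intro eq_vecI) auto
  thus False using assms(2) by simp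
qed

lemma eigenvector_power_entry_bound:
  fixes T N :: "real mat" and w :: "complex vec"
  assumes T: "mat_le (0\<^sub>m n n) T" and N: "mat_le (0\<^sub>m n m) N" and w: "w \<in> carrier_vec m"
    and ev: "eigenvector (cmat T) (cmat N *\<^sub>v w) l" and i: "i < n"
  shows "norm l ^ k * norm ((cmat N *\<^sub>v w) $ i) \<le> (\<Sum>j<m. (T ^\<^sub>m k * N) $$ (i,j) * norm (w $ j))"
proof -
  have Tc: "T \<in> carrier_mat n n" and Nc: "N \<in> carrier_mat n m"
    using mat_le_carrier T N by auto
  have TkN: "T ^\<^sub>m k * N \<in> carrier_mat n m" using pow_carrier_mat[OF Tc] Nc by (rule mult_carrier_mat)
  have "l ^ k \<cdot>\<^sub>v (cmat N *\<^sub>v w) = cmat T ^\<^sub>m k *\<^sub>v (cmat N *\<^sub>v w)"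
    using eigenvector_pow[of "cmat T" n, OF _ ev] Tc by simp
  also have "\<dots> = cmat (T ^\<^sub>m k * N) *\<^sub>v w"
    using Tc Nc w
    by (simp add: of_real_hom.mat_hom_mult[of _ n n _ m] of_real_hom.mat_hom_pow[OF Tc] assoc_mult_mat_vec_dim)
  finally have "l ^ k * (cmat N *\<^sub>v w) $ i = (cmat (T ^\<^sub>m k * N) *\<^sub>v w) $ i"
    using arg_cong[of _ _ "\<lambda>x. x $ i"] Nc i by (metis carrier_matD(1) dim_mult_mat_vec index_map_mat(2)
        index_smult_vec(1))
  also have "\<dots> = (\<Sum>j<m. cmat (T ^\<^sub>m k * N) $$ (i,j) * w $ j)"
    by (rule index_mult_mat_vec_sum) (use TkN w i in auto)
  also have "\<dots> = (\<Sum>j<m. complex_of_real ((T ^\<^sub>m k * N) $$ (i,j)) * w $ j)"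
    using carrier_matD[OF TkN] i by (intro sum.cong) auto
  finally have "norm l ^ k * norm ((cmat N *\<^sub>v w) $ i)
      = norm (\<Sum>j<m. complex_of_real ((T ^\<^sub>m k * N) $$ (i,j)) * w $ j)"
    by (metis norm_mult norm_power)
  also have "\<dots> \<le> (\<Sum>j<m. norm (complex_of_real ((T ^\<^sub>m k * N) $$ (i,j)) * w $ j))"
    by (rule norm_sum)
  also have "\<dots> = (\<Sum>j<m. (T ^\<^sub>m k * N) $$ (i,j) * norm (w $ j))"
  proof (rule sum.cong)
    fix j assume "j \<in> {..<m}"
    hence "0 \<le> (T ^\<^sub>m k * N) $$ (i,j)"
      using mat_leD[OF nonneg_mult_mat[OF nonneg_pow_mat[OF T] N], of i j] i by simp
    thus "norm (complex_of_real ((T ^\<^sub>m k * N) $$ (i,j)) * w $ j) = (T ^\<^sub>m k * N) $$ (i,j) * norm (w $ j)"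
      by (simp add: norm_mult)
  qed simp
  finally show ?thesis .
qed

lemma norm_eigenvalue_le_rho_of_intertwining:
  fixes T S N :: "real mat" and w :: "complex vec"
  assumes T: "mat_le (0\<^sub>m n n) T" and S: "mat_le (0\<^sub>m m m) S" and N: "mat_le (0\<^sub>m n m) N"
    and le: "mat_le (T * N) (N * S)"
    and w: "w \<in> carrier_vec m" and ev: "eigenvector (cmat T) (cmat N *\<^sub>v w) l"
  shows "norm l \<le> rho S"
proof -
  have Nc: "N \<in> carrier_mat n m" and Sc: "S \<in> carrier_mat m m"
    using mat_le_carrier N S by auto
  let ?v = "cmat N *\<^sub>v w"
  have "?v \<noteq> 0\<^sub>v n" and "?v \<in> carrier_vec n"
    using ev mat_le_carrier[OF T] unfolding eigenvector_def by simp_all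
  then obtain i where i: "i < n" and vi: "?v $ i \<noteq> 0"
    using nonzero_vec_has_nonzero_entry by blast
  show ?thesis
  proof (rule le_rho_of_power_growth[OF Sc,
        where K = "norm (?v $ i)" and a = "\<lambda>l' j. N $$ (i,l') * norm (w $ j)" and c = "norm l"])
    show "0 < norm (?v $ i)" using vi by simp
    fix l' j assume "l' < m" and "j < m"
    thus "0 \<le> N $$ (i,l') * norm (w $ j)" using mat_leD[OF N, of i l'] i by simp
  next
    fix k
    have "norm l ^ k * norm (?v $ i) \<le> (\<Sum>j<m. (T ^\<^sub>m k * N) $$ (i,j) * norm (w $ j))"
      by (rule eigenvector_power_entry_bound[OF T N w ev i])
    also have "\<dots> \<le> (\<Sum>j<m. (N * S ^\<^sub>m k) $$ (i,j) * norm (w $ j))"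
    proof (intro sum_mono mult_right_mono)
      fix j assume "j \<in> {..<m}"
      thus "(T ^\<^sub>m k * N) $$ (i,j) \<le> (N * S ^\<^sub>m k) $$ (i,j)"
        using mat_leD[OF intertwining_pow_mat_le[OF T S Nc le, of k], of i j] i Nc
          carrier_matD[OF mat_le_carrier[OF T]] by simp
    qed simp
    also have "\<dots> = (\<Sum>j<m. \<Sum>l'<m. N $$ (i,l') * (S ^\<^sub>m k) $$ (l',j) * norm (w $ j))"
    proof (rule sum.cong[OF refl])
      fix j assume "j \<in> {..<m}"
      hence "(N * S ^\<^sub>m k) $$ (i,j) = (\<Sum>l'<m. N $$ (i,l') * (S ^\<^sub>m k) $$ (l',j))"
        by (intro index_mult_mat_sum[OF Nc pow_carrier_mat[OF Sc] i]) simp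
      thus "(N * S ^\<^sub>m k) $$ (i,j) * norm (w $ j)
          = (\<Sum>l'<m. N $$ (i,l') * (S ^\<^sub>m k) $$ (l',j) * norm (w $ j))"
        by (simp add: sum_distrib_right)
    qed
    also have "\<dots> = (\<Sum>l'<m. \<Sum>j<m. (N $$ (i,l') * norm (w $ j)) * (S ^\<^sub>m k) $$ (l',j))"
      by (subst sum.swap) (simp add: ac_simps)
    finally show "norm l ^ k * norm (?v $ i) \<le> \<dots>" .
  qed
qed

lemma eigenvector_in_col_range:
  fixes N X T :: "real mat"
  assumes N: "N \<in> carrier_mat n m" and X: "X \<in> carrier_mat m n" and TNX: "T = N * X"
    and ev: "eigenvector (cmat T) v l" and l: "l \<noteq> 0"
  shows "\<exists>w \<in> carrier_vec m. cmat N *\<^sub>v w = v"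
proof
  have N': "cmat N \<in> carrier_mat n m" and X': "cmat X \<in> carrier_mat m n" using N X by auto
  have v: "v \<in> carrier_vec n" and Tv: "cmat N *\<^sub>v (cmat X *\<^sub>v v) = l \<cdot>\<^sub>v v"
    using ev N' X' unfolding eigenvector_def TNX of_real_hom.mat_hom_mult[OF N X] by auto
  show "(1 / l) \<cdot>\<^sub>v (cmat X *\<^sub>v v) \<in> carrier_vec m" using X' v by simp
  have "cmat N *\<^sub>v ((1 / l) \<cdot>\<^sub>v (cmat X *\<^sub>v v)) = (1 / l) \<cdot>\<^sub>v (l \<cdot>\<^sub>v v)"
    using N' X' v by (simp add: mult_mat_vec Tv)
  thus "cmat N *\<^sub>v ((1 / l) \<cdot>\<^sub>v (cmat X *\<^sub>v v)) = v" using l by (simp add: smult_smult_assoc)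
qed

lemma smult_rho_le_of_intertwining:
  fixes T S N X :: "real mat"
  assumes T: "mat_le (0\<^sub>m n n) T" and S: "mat_le (0\<^sub>m m m) S" and N: "mat_le (0\<^sub>m n m) N"
    and X: "X \<in> carrier_mat m n" and TNX: "T = N * X"
    and c: "0 \<le> c" and le: "mat_le ((c \<cdot>\<^sub>m T) * N) (N * S)"
    and n: "n > 0" and m: "m > 0"
  shows "c * rho T \<le> rho S"
proof -
  have Tc: "T \<in> carrier_mat n n" using mat_le_carrier[OF T] .
  obtain l where ev: "eigenvalue (cmat T) l" and l: "norm l = rho T"
    using rho_attained[OF Tc n] by blast
  show ?thesis
  proof (cases "l = 0")
    case True
    thus ?thesis using l rho_nonneg[OF mat_le_carrier[OF S] m] by simp
  next
    case False
    obtain v where v: "eigenvector (cmat T) v l" using ev unfolding eigenvalue_def by blast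
    then obtain w where w: "w \<in> carrier_vec m" and Nw: "cmat N *\<^sub>v w = v"
      using eigenvector_in_col_range[OF mat_le_carrier[OF N] X TNX _ False] by blast
    have "eigenvector (cmat (c \<cdot>\<^sub>m T)) v (complex_of_real c * l)"
      using v Tc unfolding eigenvector_def cmat_smult by (auto simp: smult_mult_mat_vec smult_smult_assoc)
    moreover have "mat_le (0\<^sub>m n n) (c \<cdot>\<^sub>m T)"
      by (rule mat_leI[of _ n n]) (use Tc c mat_leD[OF T] in auto)
    ultimately have "norm (complex_of_real c * l) \<le> rho S"
      using norm_eigenvalue_le_rho_of_intertwining[OF _ S N le w] Nw by blast
    thus ?thesis unfolding norm_mult norm_of_real l using c by simp
  qed
qed

lemma rho_le_of_intertwining:
  fixes T S N X :: "real mat"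
  assumes T: "mat_le (0\<^sub>m n n) T" and S: "mat_le (0\<^sub>m m m) S" and N: "mat_le (0\<^sub>m n m) N"
    and X: "X \<in> carrier_mat m n" and TNX: "T = N * X" and le: "mat_le (T * N) (N * S)"
    and n: "n > 0" and m: "m > 0"
  shows "rho T \<le> rho S"
proof -
  have "1 \<cdot>\<^sub>m T = T" by (intro eq_matI) auto
  thus ?thesis using smult_rho_le_of_intertwining[OF T S N X TNX _ _ n m, of 1] le by simp
qed

lemma le_rho_of_smult_intertwining:
  fixes S N :: "real mat"
  assumes S: "mat_le (0\<^sub>m m m) S" and N: "mat_lt (0\<^sub>m n m) N"
    and d: "0 \<le> d" and le: "mat_le (d \<cdot>\<^sub>m N) (N * S)"
    and n: "n > 0" and m: "m > 0"
  shows "d \<le> rho S"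
proof -
  have N0: "mat_le (0\<^sub>m n m) N" using mat_lt_imp_mat_le[OF N] .
  have Nc: "N \<in> carrier_mat n m" using mat_le_carrier[OF N0] .
  let ?e = "unit_vec m 0 :: complex vec"
  have "cmat N *\<^sub>v ?e = col (cmat N) 0" using mult_unit_vec_col[of 0 "cmat N"] Nc m by simp
  hence Ne0: "(cmat N *\<^sub>v ?e) $ 0 \<noteq> 0" using Nc n m mat_ltD[OF N, of 0 0] by simp
  have "cmat N *\<^sub>v ?e \<noteq> 0\<^sub>v n"
  proof
    assume "cmat N *\<^sub>v ?e = 0\<^sub>v n"
    hence "(cmat N *\<^sub>v ?e) $ 0 = 0\<^sub>v n $ 0" by (rule arg_cong)
    also have "\<dots> = 0" using n by (rule index_zero_vec(1))
    finally have "(cmat N *\<^sub>v ?e) $ 0 = 0" .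
    thus False using Ne0 by simp
  qed
  moreover have "cmat N *\<^sub>v ?e \<in> carrier_vec n" by (rule mult_mat_vec_carrier) (use Nc in auto)
  ultimately have ev: "eigenvector (cmat (d \<cdot>\<^sub>m 1\<^sub>m n)) (cmat N *\<^sub>v ?e) (complex_of_real d)"
    unfolding eigenvector_def cmat_smult of_real_hom.mat_hom_one
    by (simp add: smult_mult_mat_vec[of "1\<^sub>m n" n n])
  have "mat_le (0\<^sub>m n n) (d \<cdot>\<^sub>m 1\<^sub>m n)" by (rule mat_leI[of _ n n]) (use d in auto)
  moreover have "(d \<cdot>\<^sub>m 1\<^sub>m n) * N = d \<cdot>\<^sub>m N" using Nc by (simp add: mult_smult_assoc_mat[of _ n n])
  ultimately have "norm (complex_of_real d) \<le> rho S"
    using norm_eigenvalue_le_rho_of_intertwining[OF _ S N0 _ _ ev] le by simp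
  thus ?thesis using d by simp
qed

lemma exists_pos_smult_mat_le:
  fixes P Q :: "real mat"
  assumes P: "mat_lt (0\<^sub>m n m) P" and Q: "Q \<in> carrier_mat n m"
  shows "\<exists>d>0. mat_le (d \<cdot>\<^sub>m Q) P"
proof -
  define ratio where "ratio = (\<lambda>(i,j). P $$ (i,j) / (\<bar>Q $$ (i,j)\<bar> + 1))"
  define d where "d = Min (insert 1 (ratio ` ({..<n} \<times> {..<m})))"
  have Pij: "0 < P $$ (i,j)" if "i < n" "j < m" for i j
    using mat_ltD[OF P, of i j] that by simp
  have fin: "finite (insert 1 (ratio ` ({..<n} \<times> {..<m})))" by simp
  have "0 < ratio (i,j)" if "i < n" "j < m" for i j
    using Pij[OF that] unfolding ratio_def by (simp add: add_nonneg_pos)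
  hence "\<forall>x \<in> insert 1 (ratio ` ({..<n} \<times> {..<m})). 0 < x" by auto
  hence d: "d > 0" unfolding d_def using Min_gr_iff[OF fin] by blast
  have dQ: "d * Q $$ (i,j) \<le> P $$ (i,j)" if ij: "i < n" "j < m" for i j
  proof -
    have "d \<le> ratio (i,j)" unfolding d_def using fin ij by (intro Min_le) auto
    hence "d * (\<bar>Q $$ (i,j)\<bar> + 1) \<le> P $$ (i,j)"
      unfolding ratio_def by (simp add: pos_le_divide_eq add_nonneg_pos)
    moreover have "d * Q $$ (i,j) \<le> d * (\<bar>Q $$ (i,j)\<bar> + 1)" using d by (intro mult_left_mono) auto
    ultimately show ?thesis by linarith
  qed
  have "mat_le (d \<cdot>\<^sub>m Q) P"
  proof (rule mat_leI)
    show "d \<cdot>\<^sub>m Q \<in> carrier_mat n m" using Q by simp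
    show "P \<in> carrier_mat n m" using P unfolding mat_lt_def carrier_mat_def by simp
    fix i j assume "i < n" and "j < m"
    thus "(d \<cdot>\<^sub>m Q) $$ (i,j) \<le> P $$ (i,j)" using Q dQ by simp
  qed
  with d show ?thesis by blast
qed

lemma rho_less_of_strict_intertwining:
  fixes T S N X :: "real mat"
  assumes T: "mat_le (0\<^sub>m n n) T" and S: "mat_le (0\<^sub>m m m) S" and N: "mat_lt (0\<^sub>m n m) N"
    and X: "X \<in> carrier_mat m n" and TNX: "T = N * X" and lt: "mat_lt (T * N) (N * S)"
    and n: "n > 0" and m: "m > 0"
  shows "rho T < rho S"
proof -
  have N0: "mat_le (0\<^sub>m n m) N" using mat_lt_imp_mat_le[OF N] .
  have Tc: "T \<in> carrier_mat n n" and Sc: "S \<in> carrier_mat m m" and Nc: "N \<in> carrier_mat n m"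
    using mat_le_carrier T S N0 by auto
  have TN0: "mat_le (0\<^sub>m n m) (T * N)" using nonneg_mult_mat[OF T N0] .
  have "mat_lt (0\<^sub>m n m) (N * S - T * N)"
    using mat_ltD[OF lt] Tc Nc Sc by (intro mat_ltI[of _ n m]) auto
  then obtain d where d: "d > 0" and dle: "mat_le (d \<cdot>\<^sub>m (T * N + N)) (N * S - T * N)"
    using exists_pos_smult_mat_le[of n m _ "T * N + N"] Tc Nc by auto
  have entry: "(T * N) $$ (i,j) + d * (T * N) $$ (i,j) + d * N $$ (i,j) \<le> (N * S) $$ (i,j)"
    and TNij: "0 \<le> (T * N) $$ (i,j)" and Nij: "0 \<le> N $$ (i,j)" if "i < n" "j < m" for i j
    using mat_leD[OF dle, of i j] mat_leD[OF TN0, of i j] mat_leD[OF N0, of i j] that Tc Nc Sc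
    by (simp_all add: distrib_left)
  \<comment> \<open>the slack d yields both (1 + d) T N \<le> N S and d N \<le> N S; the latter covers \<rho>(T) = 0\<close>
  have "mat_le (((1 + d) \<cdot>\<^sub>m T) * N) (N * S)"
  proof (rule mat_leI)
    fix i j assume ij: "i < n" "j < m"
    have "(((1 + d) \<cdot>\<^sub>m T) * N) $$ (i,j) = (T * N) $$ (i,j) + d * (T * N) $$ (i,j)"
      using Tc Nc ij by (simp add: mult_smult_assoc_mat[OF Tc Nc] distrib_right)
    moreover have "0 \<le> d * N $$ (i,j)" using Nij[OF ij] d by simp
    ultimately show "(((1 + d) \<cdot>\<^sub>m T) * N) $$ (i,j) \<le> (N * S) $$ (i,j)"
      using entry[OF ij] by linarith
  qed (use Tc Nc Sc in auto)
  hence rT: "(1 + d) * rho T \<le> rho S"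
    using smult_rho_le_of_intertwining[OF T S N0 X TNX _ _ n m] d by simp
  have "mat_le (d \<cdot>\<^sub>m N) (N * S)"
  proof (rule mat_leI)
    fix i j assume ij: "i < n" "j < m"
    have "0 \<le> d * (T * N) $$ (i,j)" using TNij[OF ij] d by simp
    thus "(d \<cdot>\<^sub>m N) $$ (i,j) \<le> (N * S) $$ (i,j)"
      using entry[OF ij] TNij[OF ij] ij Nc by simp
  qed (use Nc Sc in auto)
  hence dS: "d \<le> rho S" using le_rho_of_smult_intertwining[OF S N _ _ n m] d by simp
  show ?thesis
  proof (cases "rho T = 0")
    case False
    hence "0 < rho T" using rho_nonneg[OF Tc n] by simp
    hence "rho T < (1 + d) * rho T" using d by (simp add: distrib_right)
    thus ?thesis using rT by linarith
  qed (use d dS in simp)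
qed

lemma rho_le_of_intertwining_transposed:
  fixes T S N X :: "real mat"
  assumes T: "mat_le (0\<^sub>m n n) T" and S: "mat_le (0\<^sub>m m m) S" and N: "mat_le (0\<^sub>m n m) N"
    and X: "X \<in> carrier_mat m n" and SXN: "S = X * N" and le: "mat_le (N * S) (T * N)"
    and n: "n > 0" and m: "m > 0"
  shows "rho S \<le> rho T"
proof -
  have Tc: "T \<in> carrier_mat n n" and Sc: "S \<in> carrier_mat m m" and Nc: "N \<in> carrier_mat n m"
    using mat_le_carrier T S N by auto
  have "rho (transpose_mat S) \<le> rho (transpose_mat T)"
  proof (rule rho_le_of_intertwining[OF _ _ _ _ _ _ m n])
    show "mat_le (0\<^sub>m m m) (transpose_mat S)" using mat_le_transpose[OF S] by simp
    show "mat_le (0\<^sub>m n n) (transpose_mat T)" using mat_le_transpose[OF T] by simp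
    show "mat_le (0\<^sub>m m n) (transpose_mat N)" using mat_le_transpose[OF N] by simp
    show "transpose_mat X \<in> carrier_mat n m" using X by simp
    show "transpose_mat S = transpose_mat N * transpose_mat X"
      unfolding SXN by (rule transpose_mult[OF X Nc])
    show "mat_le (transpose_mat S * transpose_mat N) (transpose_mat N * transpose_mat T)"
      using mat_le_transpose[OF le] by (simp add: transpose_mult[OF Nc Sc] transpose_mult[OF Tc Nc])
  qed
  thus ?thesis using rho_transpose Tc Sc by simp
qed

lemma rho_less_of_strict_intertwining_transposed:
  fixes T S N X :: "real mat"
  assumes T: "mat_le (0\<^sub>m n n) T" and S: "mat_le (0\<^sub>m m m) S" and N: "mat_lt (0\<^sub>m n m) N"
    and X: "X \<in> carrier_mat m n" and SXN: "S = X * N" and lt: "mat_lt (N * S) (T * N)"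
    and n: "n > 0" and m: "m > 0"
  shows "rho S < rho T"
proof -
  have Tc: "T \<in> carrier_mat n n" and Sc: "S \<in> carrier_mat m m" and Nc: "N \<in> carrier_mat n m"
    using mat_le_carrier T S mat_lt_imp_mat_le[OF N] by auto
  have "rho (transpose_mat S) < rho (transpose_mat T)"
  proof (rule rho_less_of_strict_intertwining[OF _ _ _ _ _ _ m n])
    show "mat_le (0\<^sub>m m m) (transpose_mat S)" using mat_le_transpose[OF S] by simp
    show "mat_le (0\<^sub>m n n) (transpose_mat T)" using mat_le_transpose[OF T] by simp
    show "mat_lt (0\<^sub>m m n) (transpose_mat N)" using mat_lt_transpose[OF N] by simp
    show "transpose_mat X \<in> carrier_mat n m" using X by simp
    show "transpose_mat S = transpose_mat N * transpose_mat X"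
      unfolding SXN by (rule transpose_mult[OF X Nc])
    show "mat_lt (transpose_mat S * transpose_mat N) (transpose_mat N * transpose_mat T)"
      using mat_lt_transpose[OF lt] by (simp add: transpose_mult[OF Nc Sc] transpose_mult[OF Tc Nc])
  qed
  thus ?thesis using rho_transpose Tc Sc by simp
qed

lemma rho_comparison_type_I_II:
  fixes A U1 V1 U2 V2 :: "real mat"
  assumes A: "A \<in> carrier_mat m n" and m: "m > 0" and n: "n > 0"
    and s1: "proper_nonneg_splitting_I A U1 V1" and s2: "proper_nonneg_splitting_II A U2 V2"
  shows "mat_le (mp_inverse A) (0\<^sub>m n m) \<Longrightarrow> mat_le (mp_inverse U1) (mp_inverse U2) \<Longrightarrow>
      rho (mp_inverse U1 * V1) \<le> rho (mp_inverse U2 * V2)"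
    and "mat_lt (mp_inverse A) (0\<^sub>m n m) \<Longrightarrow> mat_lt (mp_inverse U1) (mp_inverse U2) \<Longrightarrow>
      rho (mp_inverse U1 * V1) < rho (mp_inverse U2 * V2)"
proof -
  have ps1: "proper_splitting A U1 V1" and T: "mat_le (0\<^sub>m n n) (mp_inverse U1 * V1)"
    using s1 A unfolding proper_nonneg_splitting_I_def by auto
  have ps2: "proper_splitting A U2 V2" and S: "mat_le (0\<^sub>m m m) (V2 * mp_inverse U2)"
    using s2 A unfolding proper_nonneg_splitting_II_def by auto
  have U1: "U1 \<in> carrier_mat m n" and V1: "V1 \<in> carrier_mat m n" and U2: "U2 \<in> carrier_mat m n"
    and V2: "V2 \<in> carrier_mat m n" using ps1 ps2 A unfolding proper_splitting_def by auto
  have U1d: "mp_inverse U1 \<in> carrier_mat n m" and U2d: "mp_inverse U2 \<in> carrier_mat n m"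
    and Ad: "mp_inverse A \<in> carrier_mat n m" using mp_inverse_carrier U1 U2 A by auto
  note i1 = proper_splitting_intertwining[OF A ps1] and i2 = proper_splitting_intertwining[OF A ps2]
  have X: "- (A * (mp_inverse U1 * V1)) \<in> carrier_mat m n" using A U1d V1 by auto
  have rS: "rho (V2 * mp_inverse U2) = rho (mp_inverse U2 * V2)"
    by (rule rho_mult_commute[OF V2 U2d m n])
  show "rho (mp_inverse U1 * V1) \<le> rho (mp_inverse U2 * V2)"
    if "mat_le (mp_inverse A) (0\<^sub>m n m)" and "mat_le (mp_inverse U1) (mp_inverse U2)"
  proof -
    have "mat_le (mp_inverse U1 * V1 * - mp_inverse A) (- mp_inverse A * (V2 * mp_inverse U2))"
      unfolding i1(3) i2(4) using that(2) Ad U1d by (intro mat_le_minus_right) auto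
    from rho_le_of_intertwining[OF T S mat_le_zero_uminus[OF that(1)] X i1(1) this n m]
    show ?thesis unfolding rS .
  qed
  show "rho (mp_inverse U1 * V1) < rho (mp_inverse U2 * V2)"
    if "mat_lt (mp_inverse A) (0\<^sub>m n m)" and "mat_lt (mp_inverse U1) (mp_inverse U2)"
  proof -
    have "mat_lt (mp_inverse U1 * V1 * - mp_inverse A) (- mp_inverse A * (V2 * mp_inverse U2))"
      unfolding i1(3) i2(4) using that(2) Ad U1d by (intro mat_lt_minus_right) auto
    from rho_less_of_strict_intertwining[OF T S mat_lt_zero_uminus[OF that(1)] X i1(1) this n m]
    show ?thesis unfolding rS .
  qed
qed

lemma rho_comparison_type_II_I:
  fixes A U1 V1 U2 V2 :: "real mat"
  assumes A: "A \<in> carrier_mat m n" and m: "m > 0" and n: "n > 0"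
    and s1: "proper_nonneg_splitting_II A U1 V1" and s2: "proper_nonneg_splitting_I A U2 V2"
  shows "mat_le (mp_inverse A) (0\<^sub>m n m) \<Longrightarrow> mat_le (mp_inverse U1) (mp_inverse U2) \<Longrightarrow>
      rho (mp_inverse U1 * V1) \<le> rho (mp_inverse U2 * V2)"
    and "mat_lt (mp_inverse A) (0\<^sub>m n m) \<Longrightarrow> mat_lt (mp_inverse U1) (mp_inverse U2) \<Longrightarrow>
      rho (mp_inverse U1 * V1) < rho (mp_inverse U2 * V2)"
proof -
  have ps1: "proper_splitting A U1 V1" and S: "mat_le (0\<^sub>m m m) (V1 * mp_inverse U1)"
    using s1 A unfolding proper_nonneg_splitting_II_def by auto
  have ps2: "proper_splitting A U2 V2" and T: "mat_le (0\<^sub>m n n) (mp_inverse U2 * V2)"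
    using s2 A unfolding proper_nonneg_splitting_I_def by auto
  have U1: "U1 \<in> carrier_mat m n" and V1: "V1 \<in> carrier_mat m n" and U2: "U2 \<in> carrier_mat m n"
    and V2: "V2 \<in> carrier_mat m n" using ps1 ps2 A unfolding proper_splitting_def by auto
  have U1d: "mp_inverse U1 \<in> carrier_mat n m" and U2d: "mp_inverse U2 \<in> carrier_mat n m"
    and Ad: "mp_inverse A \<in> carrier_mat n m" using mp_inverse_carrier U1 U2 A by auto
  note i1 = proper_splitting_intertwining[OF A ps1] and i2 = proper_splitting_intertwining[OF A ps2]
  have X: "- (V1 * mp_inverse U1 * A) \<in> carrier_mat m n" using A U1d V1 by auto
  have rS: "rho (V1 * mp_inverse U1) = rho (mp_inverse U1 * V1)"
    by (rule rho_mult_commute[OF V1 U1d m n])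
  show "rho (mp_inverse U1 * V1) \<le> rho (mp_inverse U2 * V2)"
    if "mat_le (mp_inverse A) (0\<^sub>m n m)" and "mat_le (mp_inverse U1) (mp_inverse U2)"
  proof -
    have "mat_le (- mp_inverse A * (V1 * mp_inverse U1)) (mp_inverse U2 * V2 * - mp_inverse A)"
      unfolding i1(4) i2(3) using that(2) Ad U1d by (intro mat_le_minus_right) auto
    from rho_le_of_intertwining_transposed[OF T S mat_le_zero_uminus[OF that(1)] X i1(2) this n m]
    show ?thesis unfolding rS .
  qed
  show "rho (mp_inverse U1 * V1) < rho (mp_inverse U2 * V2)"
    if "mat_lt (mp_inverse A) (0\<^sub>m n m)" and "mat_lt (mp_inverse U1) (mp_inverse U2)"
  proof -
    have "mat_lt (- mp_inverse A * (V1 * mp_inverse U1)) (mp_inverse U2 * V2 * - mp_inverse A)"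
      unfolding i1(4) i2(3) using that(2) Ad U1d by (intro mat_lt_minus_right) auto
    from rho_less_of_strict_intertwining_transposed[OF T S mat_lt_zero_uminus[OF that(1)] X i1(2) this n m]
    show ?thesis unfolding rS .
  qed
qed

theorem theorem4p14:
  fixes A U1 V1 U2 V2 :: "real mat" and m n :: nat
  assumes "A \<in> carrier_mat m n" and "m > 0" and "n > 0"
    and "(proper_nonneg_splitting_I A U1 V1 \<and> proper_nonneg_splitting_II A U2 V2) \<or>
         (proper_nonneg_splitting_II A U1 V1 \<and> proper_nonneg_splitting_I A U2 V2)"
    and "convergent_splitting U1 V1" and "convergent_splitting U2 V2"
  shows "(mat_le (mp_inverse A) (0\<^sub>m n m) \<and> mat_le (mp_inverse U1) (mp_inverse U2) \<longrightarrow>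
            rho (mp_inverse U1 * V1) \<le> rho (mp_inverse U2 * V2) \<and> rho (mp_inverse U2 * V2) < 1)
       \<and> (mat_lt (mp_inverse A) (0\<^sub>m n m) \<and> mat_lt (mp_inverse U1) (mp_inverse U2) \<longrightarrow>
            rho (mp_inverse U1 * V1) < rho (mp_inverse U2 * V2) \<and> rho (mp_inverse U2 * V2) < 1)"
proof -
  have conv: "rho (mp_inverse U2 * V2) < 1"
    using assms(6) unfolding convergent_splitting_def .
  from assms(4) show ?thesis
  proof
    assume "proper_nonneg_splitting_I A U1 V1 \<and> proper_nonneg_splitting_II A U2 V2"
    thus ?thesis using rho_comparison_type_I_II[OF assms(1-3)] conv by blast
  next
    assume "proper_nonneg_splitting_II A U1 V1 \<and> proper_nonneg_splitting_I A U2 V2"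
    thus ?thesis using rho_comparison_type_II_I[OF assms(1-3)] conv by blast
  qed
qed

end
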